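(* Let $n\geq 3$ and $\alpha_2,\dots,\alpha_n\in\mathbb{C}$ with $\alpha_2=0$ and $\alpha_3\neq0$. Then the transposed Poisson algebra $\mathbf{TP}(\alpha_2,\dots,\alpha_n)$ is isomorphic to $\mathbf{TP}(0,\alpha,0,\dots,0)$ for some $\alpha\in\mathbb{C}$.
   Context: $\mu_0^n$ is the complex commutative associative algebra with basis $\{e_1,\dots,e_n\}$ and $e_i\cdot e_j=e_{i+j}$ for $2\leq i+j\leq n$, other products zero. For $\alpha_2,\dots,\alpha_n\in\mathbb{C}$, $\mathbf{TP}(\alpha_2,\dots,\alpha_n)$ denotes $\mu_0^n$ with its associative product together with the bracket $[e_i,e_j]=(j-i)\sum_{t=i+j-1}^{n}\alpha_{t-i-j+3}e_t$ for $3\leq i+j\leq n+1$, other brackets of basis elements zero. In $\mathbf{TP}(0,\alpha,0,\dots,0)$ the parameter $\alpha$ is in the position of $\alpha_3$. Isomorphisms preserve both operations. *)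

theory Defs
  imports Complex_Main
begin

text \<open>Vectors of the n-dimensional algebra with basis e_1..e_n are coefficient
functions nat => complex supported on {1..n}; e_i corresponds to the indicator of i.\<close>

definition vec_space :: "nat \<Rightarrow> (nat \<Rightarrow> complex) set" where
  "vec_space n = {x. \<forall>t. (t < 1 \<or> n < t) \<longrightarrow> x t = 0}"

definition mu_mult :: "nat \<Rightarrow> (nat \<Rightarrow> complex) \<Rightarrow> (nat \<Rightarrow> complex) \<Rightarrow> (nat \<Rightarrow> complex)" where
  "mu_mult n x y = (\<lambda>t. if 1 \<le> t \<and> t \<le> n then
      (\<Sum>i\<in>{1..n}. \<Sum>j\<in>{1..n}. if i + j = t then x i * y j else 0) else 0)"

definition tp_bracket :: "nat \<Rightarrow> (nat \<Rightarrow> complex) \<Rightarrow> (nat \<Rightarrow> complex) \<Rightarrow> (nat \<Rightarrow> complex) \<Rightarrow> (nat \<Rightarrow> complex)" where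
  "tp_bracket n \<alpha> x y = (\<lambda>t. if 1 \<le> t \<and> t \<le> n then
      (\<Sum>i\<in>{1..n}. \<Sum>j\<in>{1..n}.
         if 3 \<le> i + j \<and> i + j \<le> n + 1 \<and> i + j - 1 \<le> t
         then of_int (int j - int i) * \<alpha> (t + 3 - (i + j)) * x i * y j else 0) else 0)"

definition tp_iso :: "nat \<Rightarrow> (nat \<Rightarrow> complex) \<Rightarrow> (nat \<Rightarrow> complex) \<Rightarrow>
    ((nat \<Rightarrow> complex) \<Rightarrow> (nat \<Rightarrow> complex)) \<Rightarrow> bool" where
  "tp_iso n \<alpha> \<beta> \<phi> \<longleftrightarrow>
     bij_betw \<phi> (vec_space n) (vec_space n) \<and>
     (\<forall>x\<in>vec_space n. \<forall>y\<in>vec_space n. \<phi> (\<lambda>t. x t + y t) = (\<lambda>t. \<phi> x t + \<phi> y t)) \<and>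
     (\<forall>c. \<forall>x\<in>vec_space n. \<phi> (\<lambda>t. c * x t) = (\<lambda>t. c * \<phi> x t)) \<and>
     (\<forall>x\<in>vec_space n. \<forall>y\<in>vec_space n. \<phi> (mu_mult n x y) = mu_mult n (\<phi> x) (\<phi> y)) \<and>
     (\<forall>x\<in>vec_space n. \<forall>y\<in>vec_space n. \<phi> (tp_bracket n \<alpha> x y) = tp_bracket n \<beta> (\<phi> x) (\<phi> y))"

definition tp_isomorphic :: "nat \<Rightarrow> (nat \<Rightarrow> complex) \<Rightarrow> (nat \<Rightarrow> complex) \<Rightarrow> bool" where
  "tp_isomorphic n \<alpha> \<beta> \<longleftrightarrow> (\<exists>\<phi>. tp_iso n \<alpha> \<beta> \<phi>)"

end

theory Submission
  imports Defs "HOL-Computational_Algebra.Formal_Power_Series"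
begin

text \<open>Identify \<open>\<mu>\<^sub>0\<^sup>n\<close> with \<open>X\<cdot>\<complex>[[X]]\<close> modulo \<open>X\<^sup>n\<^sup>+\<^sup>1\<close>. Then the
  product is multiplication of series, and the bracket of \<open>TP(\<alpha>)\<close> is
  \<open>[f,g] = A\<^sub>\<alpha>\<cdot>(f g' - f' g)\<close> with weight \<open>A\<^sub>\<alpha> = \<Sum> \<alpha>\<^sub>m\<^sub>+\<^sub>2 X\<^sup>m\<close>.
  A substitution \<open>f \<mapsto> f \<circ> u\<close> with \<open>u(0) = 0\<close>, \<open>u'(0) \<noteq> 0\<close> preserves the product,
  and by the chain rule it carries the bracket of weight \<open>A\<close> to the bracket of
  weight \<open>(A \<circ> u)/u'\<close>. If \<open>\<alpha>\<^sub>2 = 0\<close> and \<open>a = \<alpha>\<^sub>3 \<noteq> 0\<close>, then \<open>A\<^sub>\<alpha> = a X + \<dots>\<close>;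
  the series \<open>v = X\<cdot>exp(\<integral>(a/A\<^sub>\<alpha> - 1/X))\<close> solves \<open>A\<^sub>\<alpha> v' = a v\<close>, and its
  compositional inverse \<open>u\<close> satisfies \<open>A\<^sub>\<alpha> \<circ> u = a X u'\<close>. So \<open>TP(\<alpha>)\<close> is
  isomorphic to the algebra of weight \<open>a X\<close>, which is \<open>TP(0, a, 0, \<dots>, 0)\<close>.\<close>

unbundle fps_syntax

definition fps_wronskian :: "'a::comm_ring_1 fps \<Rightarrow> 'a fps \<Rightarrow> 'a fps" where
  "fps_wronskian f g = f * fps_deriv g - fps_deriv f * g"

lemma fps_wronskian_nth_0:
  "f $ 0 = 0 \<Longrightarrow> g $ 0 = 0 \<Longrightarrow> fps_wronskian f g $ 0 = 0"
  by (simp add: fps_wronskian_def)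

lemma fps_wronskian_sum_sum:
  "fps_wronskian (\<Sum>i\<in>S. fps_const (c i) * f i) (\<Sum>j\<in>T. fps_const (d j) * g j) =
    (\<Sum>i\<in>S. \<Sum>j\<in>T. fps_const (c i * d j) * fps_wronskian (f i) (g j))"
proof -
  have "fps_wronskian (\<Sum>i\<in>S. fps_const (c i) * f i) (\<Sum>j\<in>T. fps_const (d j) * g j) =
     (\<Sum>i\<in>S. \<Sum>j\<in>T. (fps_const (c i) * f i) * (fps_const (d j) * fps_deriv (g j)))
   - (\<Sum>i\<in>S. \<Sum>j\<in>T. (fps_const (c i) * fps_deriv (f i)) * (fps_const (d j) * g j))"
    unfolding fps_wronskian_def fps_deriv_sum fps_deriv_mult_const_left sum_product ..
  also have "\<dots> = (\<Sum>i\<in>S. \<Sum>j\<in>T. fps_const (c i * d j) * fps_wronskian (f i) (g j))"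
    by (simp add: fps_wronskian_def sum_subtractf algebra_simps flip: fps_const_mult)
  finally show ?thesis .
qed

lemma fps_wronskian_X_power:
  assumes "1 \<le> i" "1 \<le> j"
  shows "fps_wronskian (fps_X ^ i) (fps_X ^ j) =
    fps_const (of_int (int j - int i)) * (fps_X :: 'a::comm_ring_1 fps) ^ (i + j - 1)"
proof (rule fps_ext)
  fix t
  have "(fps_X ^ i * fps_deriv (fps_X ^ j) :: 'a fps) $ t = (if t = i + j - 1 then of_nat j else 0)"
    using assms(2) by (auto simp: fps_X_power_mult_nth fps_deriv_nth fps_X_power_nth)
  moreover have "(fps_deriv (fps_X ^ i) * fps_X ^ j :: 'a fps) $ t = (if t = i + j - 1 then of_nat i else 0)"
    using assms(1) by (auto simp: fps_X_power_mult_right_nth fps_deriv_nth fps_X_power_nth)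
  ultimately show "fps_wronskian (fps_X ^ i) (fps_X ^ j) $ t =
      (fps_const (of_int (int j - int i)) * (fps_X :: 'a fps) ^ (i + j - 1)) $ t"
    by (simp add: fps_wronskian_def)
qed

lemma fps_wronskian_compose:
  fixes f g u :: "'a::idom fps"
  assumes "u $ 0 = 0"
  shows "fps_wronskian (f oo u) (g oo u) = (fps_wronskian f g oo u) * fps_deriv u"
  unfolding fps_wronskian_def fps_compose_deriv[OF assms] fps_compose_sub_distrib
    fps_compose_mult_distrib[OF assms]
  by (simp add: algebra_simps)

lemma fps_linearizing_coordinate:
  fixes A :: "'a::field_char_0 fps"
  assumes A0: "A $ 0 = 0" and A1: "A $ 1 \<noteq> 0"
  obtains v where "v $ 0 = 0" "v $ 1 = 1" "A * fps_deriv v = fps_const (A $ 1) * v"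
proof
  define a where "a = A $ 1"
  define B where "B = fps_shift 1 A"
  have A_eq: "A = fps_X * B"
    by (rule fps_ext) (simp add: B_def A0)
  have B_inverse: "B * inverse B = 1"
    using A1 by (intro inverse_mult_eq_1') (simp add: B_def)
  define D where "D = fps_const a * inverse B - 1"
  have D_eq: "D = fps_X * fps_shift 1 D"
    using A1 by (intro fps_ext) (simp add: D_def B_def a_def)
  \<comment> \<open>\<open>fps_shift 1 D = a/A - 1/X\<close>, so \<open>v = X\<cdot>exp(\<integral>(a/A - 1/X))\<close>\<close>
  define E where "E = fps_exp 1 oo fps_integral (fps_shift 1 D) 0"
  have E_deriv: "fps_deriv E = E * fps_shift 1 D"
    by (simp add: E_def fps_compose_deriv fps_deriv_fps_integral)
  define v where "v = fps_X * E"
  show "v $ 0 = 0" "v $ 1 = 1"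
    by (simp_all add: v_def E_def)
  have "fps_deriv v = E * (1 + fps_X * fps_shift 1 D)"
    by (simp add: v_def E_deriv algebra_simps)
  also have "\<dots> = E * (1 + D)"
    by (metis D_eq)
  also have "\<dots> = E * (fps_const a * inverse B)"
    by (simp add: D_def)
  finally have "A * fps_deriv v = fps_const a * v * (B * inverse B)"
    by (simp add: A_eq v_def ac_simps)
  then show "A * fps_deriv v = fps_const (A $ 1) * v"
    by (simp add: B_inverse a_def)
qed

lemma fps_straightening_substitution:
  fixes A :: "'a::field_char_0 fps"
  assumes "A $ 0 = 0" and "A $ 1 \<noteq> 0"
  obtains u where "u $ 0 = 0" "u $ 1 \<noteq> 0" "A oo u = fps_const (A $ 1) * fps_X * fps_deriv u"
proof -
  obtain v where v0: "v $ 0 = 0" and v1: "v $ 1 = 1"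
    and v_ODE: "A * fps_deriv v = fps_const (A $ 1) * v"
    using fps_linearizing_coordinate assms by blast
  define u where "u = fps_inv v"
  have u0: "u $ 0 = 0"
    by (simp add: u_def fps_inv_def)
  have u1: "u $ 1 \<noteq> 0"
    using v1 by (simp add: u_def fps_inv_def)
  have vu: "v oo u = fps_X"
    unfolding u_def using v0 v1 by (intro fps_inv_right) simp_all
  have "(A oo u) * (fps_deriv v oo u) = fps_const (A $ 1) * fps_X"
    using arg_cong[OF v_ODE, of "\<lambda>f. f oo u"] by (simp add: fps_compose_mult_distrib[OF u0] vu)
  moreover have "(fps_deriv v oo u) * fps_deriv u = 1"
    using arg_cong[OF vu, of fps_deriv] by (simp add: fps_compose_deriv[OF u0])
  ultimately have "A oo u = fps_const (A $ 1) * fps_X * fps_deriv u"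
    by (metis mult.assoc mult.right_neutral)
  with u0 u1 show ?thesis
    by (rule that)
qed

lemma fps_cutoff_mult_cong:
  "fps_cutoff n f = fps_cutoff n f' \<Longrightarrow> fps_cutoff n g = fps_cutoff n g' \<Longrightarrow>
    fps_cutoff n (f * g) = fps_cutoff n (f' * g')"
  unfolding fps_cutoff_eq_fps_cutoff_iff fps_mult_nth by (auto intro!: sum.cong)

lemma fps_cutoff_compose_cong:
  "fps_cutoff n f = fps_cutoff n g \<Longrightarrow> fps_cutoff n (f oo u) = fps_cutoff n (g oo u)"
  unfolding fps_cutoff_eq_fps_cutoff_iff fps_compose_nth by (auto intro!: sum.cong)

lemma fps_cutoff_mult_deriv_cong:
  assumes "f $ 0 = 0" "f' $ 0 = 0" "fps_cutoff n f = fps_cutoff n f'"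
    and "fps_cutoff n g = fps_cutoff n g'"
  shows "fps_cutoff n (f * fps_deriv g) = fps_cutoff n (f' * fps_deriv g')"
  unfolding fps_cutoff_eq_fps_cutoff_iff
proof (intro allI impI)
  fix k assume "k < n"
  have "f $ i * fps_deriv g $ (k - i) = f' $ i * fps_deriv g' $ (k - i)" if "i \<le> k" for i
  proof (cases "i = 0")
    case False
    with \<open>k < n\<close> \<open>i \<le> k\<close> show ?thesis
      using assms(3,4) by (simp add: fps_cutoff_eq_fps_cutoff_iff)
  qed (simp add: assms(1,2))
  then show "(f * fps_deriv g) $ k = (f' * fps_deriv g') $ k"
    unfolding fps_mult_nth by (intro sum.cong) auto
qed

lemma fps_cutoff_wronskian_cong:
  assumes "f $ 0 = 0" "f' $ 0 = 0" "g $ 0 = 0" "g' $ 0 = 0"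
    and "fps_cutoff n f = fps_cutoff n f'" "fps_cutoff n g = fps_cutoff n g'"
  shows "fps_cutoff n (fps_wronskian f g) = fps_cutoff n (fps_wronskian f' g')"
proof -
  have "fps_cutoff n (f * fps_deriv g) = fps_cutoff n (f' * fps_deriv g')"
    and "fps_cutoff n (g * fps_deriv f) = fps_cutoff n (g' * fps_deriv f')"
    by (intro fps_cutoff_mult_deriv_cong assms)+
  then show ?thesis
    unfolding fps_wronskian_def fps_cutoff_diff by (simp add: mult.commute)
qed

definition fps_to_vec :: "nat \<Rightarrow> complex fps \<Rightarrow> nat \<Rightarrow> complex" where
  "fps_to_vec n f = (\<lambda>t. if 1 \<le> t \<and> t \<le> n then f $ t else 0)"

definition tp_weight :: "(nat \<Rightarrow> complex) \<Rightarrow> complex fps" where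
  "tp_weight \<alpha> = Abs_fps (\<lambda>m. \<alpha> (m + 2))"

lemma vec_space_apply_0: "x \<in> vec_space n \<Longrightarrow> x 0 = 0"
  by (simp add: vec_space_def)

lemma fps_to_vec_in_vec_space: "fps_to_vec n f \<in> vec_space n"
  by (simp add: vec_space_def fps_to_vec_def)

lemma fps_to_vec_Abs_fps: "x \<in> vec_space n \<Longrightarrow> fps_to_vec n (Abs_fps x) = x"
  by (auto simp: fps_to_vec_def vec_space_def fun_eq_iff Suc_le_eq)

lemma fps_to_vec_cong:
  "fps_cutoff (Suc n) f = fps_cutoff (Suc n) g \<Longrightarrow> fps_to_vec n f = fps_to_vec n g"
  unfolding fps_cutoff_eq_fps_cutoff_iff fps_to_vec_def by auto

lemma fps_cutoff_Abs_fps_to_vec: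
  "f $ 0 = 0 \<Longrightarrow> fps_cutoff (Suc n) (Abs_fps (fps_to_vec n f)) = fps_cutoff (Suc n) f"
  unfolding fps_cutoff_eq_fps_cutoff_iff by (auto simp: fps_to_vec_def Suc_le_eq)

lemma fps_to_vec_add: "fps_to_vec n (f + g) = (\<lambda>t. fps_to_vec n f t + fps_to_vec n g t)"
  by (auto simp: fps_to_vec_def)

lemma fps_to_vec_const_mult: "fps_to_vec n (fps_const c * f) = (\<lambda>t. c * fps_to_vec n f t)"
  by (auto simp: fps_to_vec_def)

lemma Abs_fps_vec_eq_sum:
  assumes "x \<in> vec_space n"
  shows "Abs_fps x = (\<Sum>i\<in>{1..n}. fps_const (x i) * fps_X ^ i)"
proof -
  have "Abs_fps x = (\<Sum>i\<in>{0..n}. fps_const (x i) * fps_X ^ i)"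
    using assms by (subst fps_poly_sum_fps_X[of n]) (simp_all add: vec_space_def)
  also have "\<dots> = (\<Sum>i\<in>{1..n}. fps_const (x i) * fps_X ^ i)"
    using vec_space_apply_0[OF assms] by (simp add: sum.atLeast_Suc_atMost)
  finally show ?thesis .
qed

lemma mu_mult_eq_fps_to_vec:
  assumes x: "x \<in> vec_space n" and y: "y \<in> vec_space n"
  shows "mu_mult n x y = fps_to_vec n (Abs_fps x * Abs_fps y)"
proof (rule ext)
  fix t
  have "Abs_fps x * Abs_fps y =
      (\<Sum>i\<in>{1..n}. \<Sum>j\<in>{1..n}. fps_const (x i * y j) * fps_X ^ (i + j))"
    unfolding Abs_fps_vec_eq_sum[OF x] Abs_fps_vec_eq_sum[OF y] sum_product
    by (intro sum.cong refl) (simp add: power_add algebra_simps)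
  then have "(Abs_fps x * Abs_fps y) $ t =
      (\<Sum>i\<in>{1..n}. \<Sum>j\<in>{1..n}. if i + j = t then x i * y j else 0)"
    by (auto simp: fps_sum_nth fps_X_power_nth intro!: sum.cong)
  then show "mu_mult n x y t = fps_to_vec n (Abs_fps x * Abs_fps y) t"
    by (simp add: mu_mult_def fps_to_vec_def)
qed

lemma tp_weight_wronskian_X_power_nth:
  assumes "1 \<le> i" "1 \<le> j"
  shows "(tp_weight \<alpha> * fps_wronskian (fps_X ^ i) (fps_X ^ j)) $ t =
    (if i + j - 1 \<le> t then of_int (int j - int i) * \<alpha> (t + 3 - (i + j)) else 0)"
proof -
  have "tp_weight \<alpha> * fps_wronskian (fps_X ^ i) (fps_X ^ j) =
      fps_const (of_int (int j - int i)) * (tp_weight \<alpha> * fps_X ^ (i + j - 1))"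
    using assms by (simp add: fps_wronskian_X_power mult.left_commute)
  moreover have "t - (i + j - 1) + 2 = t + 3 - (i + j)" if "i + j - 1 \<le> t"
    using assms that by linarith
  ultimately show ?thesis
    by (simp only: fps_mult_left_const_nth) (simp add: fps_X_power_mult_right_nth tp_weight_def)
qed

lemma tp_bracket_eq_fps_to_vec:
  assumes x: "x \<in> vec_space n" and y: "y \<in> vec_space n"
  shows "tp_bracket n \<alpha> x y = fps_to_vec n (tp_weight \<alpha> * fps_wronskian (Abs_fps x) (Abs_fps y))"
proof (rule ext)
  fix t
  have "(tp_weight \<alpha> * fps_wronskian (Abs_fps x) (Abs_fps y)) $ t =
      (\<Sum>i\<in>{1..n}. \<Sum>j\<in>{1..n}.
        x i * y j * (tp_weight \<alpha> * fps_wronskian (fps_X ^ i) (fps_X ^ j)) $ t)"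
    unfolding Abs_fps_vec_eq_sum[OF x] Abs_fps_vec_eq_sum[OF y] fps_wronskian_sum_sum
      sum_distrib_left fps_sum_nth
    by (simp add: mult.left_commute[of "tp_weight \<alpha>"])
  also have "\<dots> = (\<Sum>i\<in>{1..n}. \<Sum>j\<in>{1..n}.
         if 3 \<le> i + j \<and> i + j \<le> n + 1 \<and> i + j - 1 \<le> t
         then of_int (int j - int i) * \<alpha> (t + 3 - (i + j)) * x i * y j else 0)"
    if "t \<le> n"
  proof (intro sum.cong refl)
    fix i j assume "i \<in> {1..n}" "j \<in> {1..n}"
    moreover have "i = 1 \<and> j = 1" if "i + j < 3" "1 \<le> i" "1 \<le> j"
      using that by linarith
    ultimately show "x i * y j * (tp_weight \<alpha> * fps_wronskian (fps_X ^ i) (fps_X ^ j)) $ t =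
        (if 3 \<le> i + j \<and> i + j \<le> n + 1 \<and> i + j - 1 \<le> t
         then of_int (int j - int i) * \<alpha> (t + 3 - (i + j)) * x i * y j else 0)"
      using \<open>t \<le> n\<close> by (auto simp: tp_weight_wronskian_X_power_nth)
  qed
  finally show "tp_bracket n \<alpha> x y t =
      fps_to_vec n (tp_weight \<alpha> * fps_wronskian (Abs_fps x) (Abs_fps y)) t"
    by (simp add: tp_bracket_def fps_to_vec_def)
qed

definition tp_subst :: "nat \<Rightarrow> complex fps \<Rightarrow> (nat \<Rightarrow> complex) \<Rightarrow> nat \<Rightarrow> complex" where
  "tp_subst n u x = fps_to_vec n (Abs_fps x oo u)"

lemma fps_cutoff_tp_subst:
  "x \<in> vec_space n \<Longrightarrow>
    fps_cutoff (Suc n) (Abs_fps (tp_subst n u x)) = fps_cutoff (Suc n) (Abs_fps x oo u)"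
  unfolding tp_subst_def by (rule fps_cutoff_Abs_fps_to_vec) (simp add: vec_space_apply_0)

lemma tp_subst_in_vec_space: "tp_subst n u x \<in> vec_space n"
  by (simp add: tp_subst_def fps_to_vec_in_vec_space)

lemma tp_subst_tp_subst:
  assumes "x \<in> vec_space n" "u $ 0 = 0" "v $ 0 = 0"
  shows "tp_subst n v (tp_subst n u x) = tp_subst n (u oo v) x"
proof -
  have "tp_subst n v (tp_subst n u x) = fps_to_vec n ((Abs_fps x oo u) oo v)"
    unfolding tp_subst_def[of n v]
    by (intro fps_to_vec_cong fps_cutoff_compose_cong fps_cutoff_tp_subst assms(1))
  then show ?thesis
    by (simp add: tp_subst_def fps_compose_assoc assms(2,3))
qed

lemma tp_subst_fps_X: "x \<in> vec_space n \<Longrightarrow> tp_subst n fps_X x = x"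
  by (simp add: tp_subst_def fps_to_vec_Abs_fps)

lemma tp_subst_bij_betw:
  assumes "u $ 0 = 0" "u $ 1 \<noteq> 0"
  shows "bij_betw (tp_subst n u) (vec_space n) (vec_space n)"
proof (rule bij_betw_byWitness[where f' = "tp_subst n (fps_inv u)"])
  have "fps_inv u $ 0 = 0"
    by (simp add: fps_inv_def)
  then show "\<forall>x\<in>vec_space n. tp_subst n (fps_inv u) (tp_subst n u x) = x"
    and "\<forall>x\<in>vec_space n. tp_subst n u (tp_subst n (fps_inv u) x) = x"
    using assms by (simp_all add: tp_subst_tp_subst tp_subst_fps_X fps_inv fps_inv_right)
qed (auto simp: tp_subst_in_vec_space)

lemma tp_subst_add: "tp_subst n u (\<lambda>t. x t + y t) = (\<lambda>t. tp_subst n u x t + tp_subst n u y t)"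
proof -
  have "Abs_fps (\<lambda>t. x t + y t) = Abs_fps x + Abs_fps y"
    by (rule fps_ext) simp
  then show ?thesis
    by (simp add: tp_subst_def fps_compose_add_distrib fps_to_vec_add)
qed

lemma tp_subst_scale: "tp_subst n u (\<lambda>t. c * x t) = (\<lambda>t. c * tp_subst n u x t)"
proof -
  have "Abs_fps (\<lambda>t. c * x t) = fps_const c * Abs_fps x"
    by (rule fps_ext) simp
  then show ?thesis
    by (simp add: tp_subst_def fps_to_vec_const_mult flip: fps_const_mult_apply_left)
qed

lemma tp_subst_mu_mult:
  assumes u0: "u $ 0 = 0" and x: "x \<in> vec_space n" and y: "y \<in> vec_space n"
  shows "tp_subst n u (mu_mult n x y) = mu_mult n (tp_subst n u x) (tp_subst n u y)"
proof -
  have "tp_subst n u (mu_mult n x y) = fps_to_vec n ((Abs_fps x * Abs_fps y) oo u)"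
    unfolding mu_mult_eq_fps_to_vec[OF x y] tp_subst_def
    by (intro fps_to_vec_cong fps_cutoff_compose_cong fps_cutoff_Abs_fps_to_vec)
      (simp add: vec_space_apply_0[OF x])
  also have "\<dots> = fps_to_vec n ((Abs_fps x oo u) * (Abs_fps y oo u))"
    by (simp add: fps_compose_mult_distrib[OF u0])
  also have "\<dots> = fps_to_vec n (Abs_fps (tp_subst n u x) * Abs_fps (tp_subst n u y))"
    by (intro fps_to_vec_cong fps_cutoff_mult_cong fps_cutoff_tp_subst[symmetric] x y)
  also have "\<dots> = mu_mult n (tp_subst n u x) (tp_subst n u y)"
    by (simp add: mu_mult_eq_fps_to_vec tp_subst_in_vec_space)
  finally show ?thesis .
qed

lemma tp_subst_tp_bracket:
  assumes u0: "u $ 0 = 0" and weight: "tp_weight \<alpha> oo u = tp_weight \<beta> * fps_deriv u"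
    and x: "x \<in> vec_space n" and y: "y \<in> vec_space n"
  shows "tp_subst n u (tp_bracket n \<alpha> x y) = tp_bracket n \<beta> (tp_subst n u x) (tp_subst n u y)"
proof -
  define f g where "f = Abs_fps x oo u" and "g = Abs_fps y oo u"
  have "tp_subst n u (tp_bracket n \<alpha> x y) =
      fps_to_vec n ((tp_weight \<alpha> * fps_wronskian (Abs_fps x) (Abs_fps y)) oo u)"
    unfolding tp_bracket_eq_fps_to_vec[OF x y] tp_subst_def
    by (intro fps_to_vec_cong fps_cutoff_compose_cong fps_cutoff_Abs_fps_to_vec)
      (simp add: fps_wronskian_nth_0 vec_space_apply_0[OF x] vec_space_apply_0[OF y])
  also have "(tp_weight \<alpha> * fps_wronskian (Abs_fps x) (Abs_fps y)) oo u =
      tp_weight \<beta> * fps_wronskian f g"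
    by (simp add: f_def g_def fps_wronskian_compose[OF u0] fps_compose_mult_distrib[OF u0] weight
        mult.assoc mult.left_commute[of "fps_deriv u"])
  also have "fps_to_vec n (tp_weight \<beta> * fps_wronskian f g) =
      fps_to_vec n (tp_weight \<beta> * fps_wronskian (Abs_fps (tp_subst n u x)) (Abs_fps (tp_subst n u y)))"
    unfolding f_def g_def
    by (intro fps_to_vec_cong fps_cutoff_mult_cong fps_cutoff_wronskian_cong refl
        fps_cutoff_tp_subst[symmetric] x y)
      (simp_all add: vec_space_apply_0[OF x] vec_space_apply_0[OF y] tp_subst_def fps_to_vec_def)
  also have "\<dots> = tp_bracket n \<beta> (tp_subst n u x) (tp_subst n u y)"
    by (simp add: tp_bracket_eq_fps_to_vec tp_subst_in_vec_space)
  finally show ?thesis .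
qed

lemma tp_isomorphic_by_substitution:
  assumes "u $ 0 = 0" "u $ 1 \<noteq> 0" and "tp_weight \<alpha> oo u = tp_weight \<beta> * fps_deriv u"
  shows "tp_isomorphic n \<alpha> \<beta>"
  unfolding tp_isomorphic_def tp_iso_def
  by (rule exI[of _ "tp_subst n u"])
    (simp add: assms tp_subst_bij_betw[OF assms(1,2)] tp_subst_add tp_subst_scale tp_subst_mu_mult
      tp_subst_tp_bracket)

theorem mainTheorem8:
  fixes n :: nat and \<alpha> :: "nat \<Rightarrow> complex"
  assumes "n \<ge> 3" and "\<alpha> 2 = 0" and "\<alpha> 3 \<noteq> 0"
  shows "\<exists>a :: complex. tp_isomorphic n \<alpha> (\<lambda>k. if k = 3 then a else 0)"
proof
  define \<beta> where "\<beta> = (\<lambda>k::nat. if k = 3 then \<alpha> 3 else 0)"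
  have "tp_weight \<alpha> $ 0 = 0" "tp_weight \<alpha> $ 1 = \<alpha> 3"
    using assms(2) by (simp_all add: tp_weight_def numeral_2_eq_2 numeral_3_eq_3)
  then obtain u where "u $ 0 = 0" "u $ 1 \<noteq> 0"
    and "tp_weight \<alpha> oo u = fps_const (\<alpha> 3) * fps_X * fps_deriv u"
    using fps_straightening_substitution assms(3) by metis
  moreover have "tp_weight \<beta> = fps_const (\<alpha> 3) * fps_X"
    by (rule fps_ext) (simp add: tp_weight_def \<beta>_def fps_X_nth numeral_3_eq_3)
  ultimately show "tp_isomorphic n \<alpha> \<beta>"
    by (intro tp_isomorphic_by_substitution) simp_all
qed

end
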